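(* Let $n\ge 3$, $k\ge 1$, and let $T_1,\dots,T_k$ be independent uniformly random spanning trees of the complete graph $K_n$. For an edge $e$ of $K_n$ let $X_e^{T_i}$ be the indicator of $e\in E(T_i)$ and \[R_e=\sum_{i=1}^k X_e^{T_i}-\max\left(X_e^{T_1},\dots,X_e^{T_k}\right).\] Let $e\ne e'$ be edges of $K_n$. Then \begin{itemize} \item if $e$ and $e'$ share no endpoint, $\mathrm{Cov}(R_e,R_{e'})=0$; \item if $e$ and $e'$ share an endpoint, \[\mathrm{Cov}(R_e,R_{e'})=-\frac{k}{n^2}+\frac{2k}{n^2}\left(1-\frac{2}{n}\right)^{k-1}+\left(1-\frac{4}{n}+\frac{3}{n^2}\right)^k-\left(1-\frac{2}{n}\right)^{2k}.\] \end{itemize}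
   Context: Uniform random spanning tree: chosen from the uniform distribution on the $n^{n-2}$ labeled spanning trees of $K_n$ on vertex set $[n]$. $R_e$ is the number of repeated (surplus) occurrences of $e$ among the trees. *)

theory Defs
  imports "HOL-Probability.Probability"
begin

definition Kn_edges :: "nat \<Rightarrow> nat set set" where
  "Kn_edges n = {{u, v} | u v. u \<in> {1..n} \<and> v \<in> {1..n} \<and> u \<noteq> v}"

definition adj :: "nat set set \<Rightarrow> (nat \<times> nat) set" where
  "adj T = {(x, y). {x, y} \<in> T \<and> x \<noteq> y}"

definition connected_by :: "nat set set \<Rightarrow> nat \<Rightarrow> nat \<Rightarrow> bool" where
  "connected_by T u v \<longleftrightarrow> (u, v) \<in> (adj T)\<^sup>*"

text \<open>A spanning tree of K_n: a connected, acyclic spanning subgraph.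
  Acyclic is expressed as: no edge lies on a cycle, i.e. removing any edge
  disconnects its two endpoints.\<close>
definition is_spanning_tree :: "nat \<Rightarrow> nat set set \<Rightarrow> bool" where
  "is_spanning_tree n T \<longleftrightarrow>
     T \<subseteq> Kn_edges n \<and>
     (\<forall>u\<in>{1..n}. \<forall>v\<in>{1..n}. connected_by T u v) \<and>
     (\<forall>e\<in>T. \<forall>u v. e = {u, v} \<longrightarrow> \<not> connected_by (T - {e}) u v)"

definition spanning_trees :: "nat \<Rightarrow> nat set set set" where
  "spanning_trees n = {T. is_spanning_tree n T}"

text \<open>k independent uniform spanning trees = uniform k-tuple of spanning trees.\<close>
definition tree_tuples :: "nat \<Rightarrow> nat \<Rightarrow> nat set set list set" where
  "tree_tuples n k = {ts. length ts = k \<and> set ts \<subseteq> spanning_trees n}"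

definition tree_tuple_pmf :: "nat \<Rightarrow> nat \<Rightarrow> nat set set list pmf" where
  "tree_tuple_pmf n k = pmf_of_set (tree_tuples n k)"

definition X_ind :: "nat set \<Rightarrow> nat set set \<Rightarrow> real" where
  "X_ind e T = (if e \<in> T then 1 else 0)"

definition R_rep :: "nat \<Rightarrow> nat set \<Rightarrow> nat set set list \<Rightarrow> real" where
  "R_rep k e ts = (\<Sum>i<k. X_ind e (ts ! i)) - (MAX i\<in>{..<k}. X_ind e (ts ! i))"

definition covariance_pmf :: "'a pmf \<Rightarrow> ('a \<Rightarrow> real) \<Rightarrow> ('a \<Rightarrow> real) \<Rightarrow> real" where
  "covariance_pmf p X Y =
     measure_pmf.expectation p (\<lambda>x. X x * Y x)
     - measure_pmf.expectation p X * measure_pmf.expectation p Y"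

end

(*
  Since each tree is a 0/1 vector of edge indicators, R_e = sum_i X_i + prod_i (1 - X_i) - 1.
  For independent trees the covariance of two such expressions expands by bilinearity into
  one-tree quantities: with a = P(e not in T) = P(e' not in T) and c = Cov(X_e, X_e'),
    Cov(R_e, R_e') = k c (1 - 2 a^(k-1)) + (a^2 + c)^k - a^(2k).
  It remains to count spanning trees of K_n containing given edges. Rooting a tree at a vertex
  turns it into a parent map, and an edge at the root can be contracted by adding a root, so all
  counts reduce to the number |R| n^(n-|R|-1) of rooted forests on n vertices with root set R.
  This gives P(e in T) = 2/n and P(e, e' in T) = 3/n^2 or 4/n^2 for adjacent or disjoint edges,
  so c = -1/n^2 or c = 0.
*)
theory Submission
  imports Defs "HOL-Combinatorics.Transposition"
begin

section \<open>Rooted forests and the generalised Cayley formula\<close>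

(* A forest on V with root set R, given by its parent map; the map is the identity outside V - R,
   which makes the encoding unique. *)
definition rooted_forests :: "'a set \<Rightarrow> 'a set \<Rightarrow> ('a \<Rightarrow> 'a) set" where
  "rooted_forests V R =
     {f. (\<forall>x\<in>V - R. f x \<in> V) \<and> (\<forall>x. x \<notin> V - R \<longrightarrow> f x = x) \<and> (\<forall>x\<in>V. \<exists>k. (f ^^ k) x \<in> R)}"

lemma rooted_forestsD:
  assumes "f \<in> rooted_forests V R"
  shows rooted_forest_parent: "x \<in> V - R \<Longrightarrow> f x \<in> V"
    and rooted_forest_fixed: "x \<notin> V - R \<Longrightarrow> f x = x"
    and rooted_forest_reaches_root: "x \<in> V \<Longrightarrow> \<exists>k. (f ^^ k) x \<in> R"
  using assms by (auto simp: rooted_forests_def)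

lemma rooted_forest_funpow_fixed:
  assumes "f \<in> rooted_forests V R" "x \<notin> V - R"
  shows "(f ^^ k) x = x"
  using rooted_forest_fixed[OF assms] by (induction k) simp_all

lemma rooted_forest_no_cycle:
  assumes f: "f \<in> rooted_forests V R" and x: "x \<in> V - R"
  shows "(f ^^ Suc k) x \<noteq> x"
proof
  assume cycle: "(f ^^ Suc k) x = x"
  obtain j where "(f ^^ j) x \<in> R"
    using rooted_forest_reaches_root[OF f] x by blast
  then have root: "(f ^^ (j mod Suc k)) x \<in> R"
    using funpow_mod_eq[OF cycle] by simp
  have "Suc k = (Suc k - j mod Suc k) + j mod Suc k"
    by (simp add: less_imp_le_nat)
  then have "x = (f ^^ (Suc k - j mod Suc k)) ((f ^^ (j mod Suc k)) x)"
    using cycle by (metis funpow_add comp_apply)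
  also have "\<dots> = (f ^^ (j mod Suc k)) x"
    using rooted_forest_funpow_fixed[OF f] root by blast
  finally show False using root x by simp
qed

lemma rooted_forest_no_fixpoint: "f \<in> rooted_forests V R \<Longrightarrow> x \<in> V - R \<Longrightarrow> f x \<noteq> x"
  using rooted_forest_no_cycle[of f V R x 0] by simp

lemma finite_rooted_forests:
  assumes "finite V"
  shows "finite (rooted_forests V R)"
proof -
  have "inj_on (\<lambda>f. restrict f (V - R)) (rooted_forests V R)"
  proof (rule inj_onI, rule ext)
    fix f g x
    assume "f \<in> rooted_forests V R" "g \<in> rooted_forests V R"
      and "restrict f (V - R) = restrict g (V - R)"
    then show "f x = g x"
      by (cases "x \<in> V - R") (auto dest: fun_cong[of _ _ x] simp: rooted_forest_fixed)
  qed
  moreover have "(\<lambda>f. restrict f (V - R)) ` rooted_forests V R \<subseteq> (V - R) \<rightarrow>\<^sub>E V"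
  proof (rule image_subsetI)
    fix f assume f: "f \<in> rooted_forests V R"
    show "restrict f (V - R) \<in> (V - R) \<rightarrow>\<^sub>E V"
      using rooted_forest_parent[OF f] by (auto simp: restrict_PiE_iff)
  qed
  ultimately show ?thesis
    using assms by (metis finite_PiE finite_Diff finite_imageD finite_subset)
qed

lemma rooted_forests_no_nonroots:
  assumes "V \<subseteq> R"
  shows "rooted_forests V R = {id}"
proof -
  have "f = id" if "f \<in> rooted_forests V R" for f
    using rooted_forest_fixed[OF that] assms by (auto simp: fun_eq_iff)
  moreover have "id \<in> rooted_forests V R"
    using assms by (auto simp: rooted_forests_def intro: exI[of _ 0])
  ultimately show ?thesis by blast
qed

lemma funpow_reach_transfer:
  assumes step: "\<And>z. z \<in> V \<Longrightarrow> (\<exists>j. (g ^^ j) z \<in> T) \<or> (g z = f z \<and> f z \<in> V)"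
    and base: "\<And>z. z \<in> V \<Longrightarrow> z \<in> R \<Longrightarrow> \<exists>j. (g ^^ j) z \<in> T"
    and "y \<in> V" "(f ^^ k) y \<in> R"
  shows "\<exists>j. (g ^^ j) y \<in> T"
  using assms(3,4)
proof (induction k arbitrary: y)
  case 0
  then show ?case using base by simp
next
  case (Suc k)
  show ?case
  proof (cases "\<exists>j. (g ^^ j) y \<in> T")
    case False
    then have "g y = f y" "f y \<in> V" using step[OF Suc.prems(1)] by auto
    moreover have "(f ^^ k) (f y) \<in> R"
      using Suc.prems(2) by (simp add: funpow_swap1)
    ultimately obtain j where "(g ^^ j) (g y) \<in> T" using Suc.IH by metis
    then have "(g ^^ Suc j) y \<in> T" by (simp add: funpow_swap1)
    then show ?thesis ..
  qed
qed

lemma rooted_forest_delete_roots: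
  assumes f: "f \<in> rooted_forests V R" and S: "{x \<in> V - R. f x \<in> R} = S"
  shows "(\<lambda>x. if x \<in> V - R - S then f x else x) \<in> rooted_forests (V - R) S"
proof -
  define h where "h = (\<lambda>x. if x \<in> V - R - S then f x else x)"
  have step: "(\<exists>j. (h ^^ j) z \<in> S) \<or> (h z = f z \<and> f z \<in> V - R)" if "z \<in> V - R" for z
  proof (cases "z \<in> S")
    case True
    then have "(h ^^ 0) z \<in> S" by simp
    then show ?thesis by blast
  next
    case False
    then show ?thesis using that rooted_forest_parent[OF f, of z] S by (auto simp: h_def)
  qed
  have "\<exists>j. (h ^^ j) x \<in> S" if x: "x \<in> V - R" for x
  proof -
    obtain k where "(f ^^ k) x \<in> R" using rooted_forest_reaches_root[OF f] x by blast
    then show ?thesis using funpow_reach_transfer[of "V - R" h S f R x k] step x by blast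
  qed
  moreover have "h x \<in> V - R" if "x \<in> V - R - S" for x
    using that rooted_forest_parent[OF f, of x] S by (auto simp: h_def)
  ultimately show ?thesis unfolding h_def[symmetric] rooted_forests_def by (auto simp: h_def)
qed

lemma rooted_forest_attach_roots:
  assumes R: "R \<subseteq> V" and S: "S \<subseteq> V - R"
    and g: "\<And>x. x \<in> S \<Longrightarrow> g x \<in> R" and h: "h \<in> rooted_forests (V - R) S"
  shows "(\<lambda>x. if x \<in> S then g x else h x) \<in> rooted_forests V R"
proof -
  define f where "f = (\<lambda>x. if x \<in> S then g x else h x)"
  have S_step: "(f ^^ 1) z \<in> R" if "z \<in> S" for z
    using g that by (simp add: f_def)
  have step: "(\<exists>j. (f ^^ j) z \<in> R) \<or> (f z = h z \<and> h z \<in> V - R)" if "z \<in> V - R" for z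
    using S_step rooted_forest_parent[OF h, of z] that by (cases "z \<in> S") (blast, simp add: f_def)
  have "\<exists>j. (f ^^ j) x \<in> R" if x: "x \<in> V" for x
  proof (cases "x \<in> R")
    case True
    then have "(f ^^ 0) x \<in> R" by simp
    then show ?thesis ..
  next
    case False
    then obtain k where "(h ^^ k) x \<in> S" using rooted_forest_reaches_root[OF h] x by blast
    then show ?thesis
      using funpow_reach_transfer[of "V - R" f R h S x k] step S_step False x by blast
  qed
  moreover have "f x \<in> V" if "x \<in> V - R" for x
    using that R g rooted_forest_parent[OF h, of x] by (auto simp: f_def)
  moreover have "f x = x" if "x \<notin> V - R" for x
    using that S rooted_forest_fixed[OF h, of x] by (auto simp: f_def)
  ultimately show ?thesis unfolding f_def[symmetric] rooted_forests_def by blast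
qed

lemma rooted_forests_split_bij:
  assumes R: "R \<subseteq> V" and S: "S \<subseteq> V - R"
  shows "bij_betw (\<lambda>f. (restrict f S, \<lambda>x. if x \<in> V - R - S then f x else x))
           {f \<in> rooted_forests V R. {x \<in> V - R. f x \<in> R} = S}
           ((S \<rightarrow>\<^sub>E R) \<times> rooted_forests (V - R) S)"
    (is "bij_betw ?split ?A ?B")
proof (rule bij_betw_byWitness[where f' = "\<lambda>(g, h) x. if x \<in> S then g x else h x"])
  show "\<forall>f\<in>?A. (\<lambda>(g, h) x. if x \<in> S then g x else h x) (?split f) = f"
    using rooted_forest_fixed S by (fastforce simp: fun_eq_iff)
  show "\<forall>p\<in>?B. ?split ((\<lambda>(g, h) x. if x \<in> S then g x else h x) p) = p"
    using rooted_forest_fixed by (fastforce simp: fun_eq_iff PiE_def extensional_def)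
  show "?split ` ?A \<subseteq> ?B"
    using rooted_forest_delete_roots by fastforce
  show "(\<lambda>(g, h) x. if x \<in> S then g x else h x) ` ?B \<subseteq> ?A"
  proof clarify
    fix g h assume g: "g \<in> S \<rightarrow>\<^sub>E R" and h: "h \<in> rooted_forests (V - R) S"
    show "(\<lambda>x. if x \<in> S then g x else h x) \<in> rooted_forests V R \<and>
          {x \<in> V - R. (if x \<in> S then g x else h x) \<in> R} = S"
      using rooted_forest_attach_roots[OF R S _ h, of g] g rooted_forest_parent[OF h] S by auto
  qed
qed

lemma card_eq_sum_card_fibres:
  assumes "finite A" "finite B" "h ` A \<subseteq> B"
  shows "card A = (\<Sum>y\<in>B. card {x \<in> A. h x = y})"
  using sum.group[OF assms, of "\<lambda>_. 1::nat"] by simp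

(* Deleting the roots leaves a forest on V - R rooted at the children S of R, and each vertex
   of S chooses its parent in R freely. *)
lemma card_rooted_forests_recurrence:
  assumes V: "finite V" and R: "R \<subseteq> V" and nonroot: "V - R \<noteq> {}"
  shows "card (rooted_forests V R) =
           (\<Sum>S\<in>Pow (V - R) - {{}}. card R ^ card S * card (rooted_forests (V - R) S))"
proof -
  have children: "{x \<in> V - R. f x \<in> R} \<in> Pow (V - R) - {{}}" if f: "f \<in> rooted_forests V R" for f
  proof -
    obtain x where "x \<in> V - R" using nonroot by blast
    then show ?thesis
      using rooted_forest_reaches_root[OF rooted_forest_delete_roots[OF f refl]] by blast
  qed
  have "card (rooted_forests V R) =
          (\<Sum>S\<in>Pow (V - R) - {{}}. card {f \<in> rooted_forests V R. {x \<in> V - R. f x \<in> R} = S})"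
    using V children by (intro card_eq_sum_card_fibres finite_rooted_forests) auto
  also have "\<dots> = (\<Sum>S\<in>Pow (V - R) - {{}}. card R ^ card S * card (rooted_forests (V - R) S))"
  proof (rule sum.cong[OF refl])
    fix S assume "S \<in> Pow (V - R) - {{}}"
    then have "S \<subseteq> V - R" "finite S" using V finite_subset by auto
    then show "card {f \<in> rooted_forests V R. {x \<in> V - R. f x \<in> R} = S} =
               card R ^ card S * card (rooted_forests (V - R) S)"
      using bij_betw_same_card[OF rooted_forests_split_bij[OF R]]
      by (simp add: card_cartesian_product card_PiE)
  qed
  finally show ?thesis .
qed

lemma sum_Pow_card:
  fixes g :: "nat \<Rightarrow> 'a::semiring_1"
  assumes "finite W"
  shows "(\<Sum>S\<in>Pow W. g (card S)) = (\<Sum>j\<le>card W. of_nat (card W choose j) * g j)"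
proof -
  have "(\<Sum>S\<in>Pow W. g (card S)) = (\<Sum>j\<le>card W. \<Sum>S\<in>{S \<in> Pow W. card S = j}. g (card S))"
    using assms by (intro sum.group[symmetric]) (auto intro: card_mono)
  also have "\<dots> = (\<Sum>j\<le>card W. of_nat (card W choose j) * g j)"
  proof (rule sum.cong[OF refl])
    fix j
    have "{S \<in> Pow W. card S = j} = {S. S \<subseteq> W \<and> card S = j}" by auto
    then show "(\<Sum>S\<in>{S \<in> Pow W. card S = j}. g (card S)) = of_nat (card W choose j) * g j"
      using n_subsets[OF assms, of j] by simp
  qed
  finally show ?thesis .
qed

lemma sum_choose_times_index:
  fixes x y :: "'a::comm_semiring_1"
  shows "(\<Sum>j\<le>m. of_nat ((m choose j) * j) * x ^ j * y ^ (m - j)) = of_nat m * x * (x + y) ^ (m - 1)"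
proof (cases m)
  case 0
  then show ?thesis by simp
next
  case (Suc n)
  have absorb: "(m choose Suc j) * Suc j = m * (n choose j)" for j
    using Suc_times_binomial[of j n] Suc by (simp add: mult.commute)
  have "(\<Sum>j\<le>m. of_nat ((m choose j) * j) * x ^ j * y ^ (m - j))
      = (\<Sum>j\<le>n. of_nat ((m choose Suc j) * Suc j) * x ^ Suc j * y ^ (n - j))"
    unfolding Suc by (subst sum.atMost_Suc_shift) simp
  also have "\<dots> = (\<Sum>j\<le>n. of_nat m * x * (of_nat (n choose j) * x ^ j * y ^ (n - j)))"
    unfolding absorb by (simp add: ac_simps)
  also have "\<dots> = of_nat m * x * (x + y) ^ n"
    by (simp only: binomial_ring sum_distrib_left)
  finally show ?thesis using Suc by simp
qed

lemma sum_nonempty_subsets_card_power: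
  assumes "finite W"
  shows "(\<Sum>S\<in>Pow W - {{}}. card S * k ^ card S * card W ^ (card W - card S)) =
         card W * k * (k + card W) ^ (card W - 1)"
proof -
  have "(\<Sum>S\<in>Pow W - {{}}. card S * k ^ card S * card W ^ (card W - card S)) =
        (\<Sum>S\<in>Pow W. card S * k ^ card S * card W ^ (card W - card S))"
    using assms by (intro sum.mono_neutral_left) auto
  also have "\<dots> = (\<Sum>j\<le>card W. ((card W choose j) * j) * k ^ j * card W ^ (card W - j))"
    using sum_Pow_card[OF assms, of "\<lambda>j. j * k ^ j * card W ^ (card W - j)"] by (simp add: ac_simps)
  also have "\<dots> = card W * k * (k + card W) ^ (card W - 1)"
    using sum_choose_times_index[of "card W" k "card W"] by simp
  finally show ?thesis .
qed

(* The number of rooted forests is |R| n^(n-|R|-1); multiplied out, this also covers R = V. *)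
theorem card_rooted_forests:
  assumes "finite V" "R \<subseteq> V"
  shows "card (rooted_forests V R) * card V = card R * card V ^ card (V - R)"
  using assms
proof (induction "card (V - R)" arbitrary: V R rule: less_induct)
  case less
  show ?case
  proof (cases "V - R = {}")
    case True
    then show ?thesis using rooted_forests_no_nonroots[of V R] less.prems by simp
  next
    case False
    define m k where "m = card (V - R)" and "k = card R"
    have fin: "finite (V - R)" using less.prems by simp
    have m: "m > 0" using False fin by (simp add: m_def card_gt_0_iff)
    have "finite R" using less.prems finite_subset by blast
    then have n: "card V = k + m"
      using card_Diff_subset[of R V] card_mono[of V R] less.prems by (simp add: m_def k_def)
    have "card (rooted_forests V R) * m =
            (\<Sum>S\<in>Pow (V - R) - {{}}. k ^ card S * (card (rooted_forests (V - R) S) * m))"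
      unfolding card_rooted_forests_recurrence[OF less.prems False] sum_distrib_right
      by (simp add: k_def ac_simps)
    also have "\<dots> = (\<Sum>S\<in>Pow (V - R) - {{}}. (card S * k ^ card S) * m ^ (m - card S))"
    proof (rule sum.cong[OF refl])
      fix S assume "S \<in> Pow (V - R) - {{}}"
      then have S: "S \<subseteq> V - R" "S \<noteq> {}" by auto
      then have "card (V - R - S) < card (V - R)"
        using fin by (intro psubset_card_mono) auto
      then have "card (rooted_forests (V - R) S) * m = card S * m ^ card (V - R - S)"
        using less.hyps fin S by (simp add: m_def)
      moreover have "card (V - R - S) = m - card S"
        using S fin by (simp add: m_def card_Diff_subset finite_subset)
      ultimately show "k ^ card S * (card (rooted_forests (V - R) S) * m) =
                       (card S * k ^ card S) * m ^ (m - card S)"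
        by simp
    qed
    also have "\<dots> = m * k * (k + m) ^ (m - 1)"
      using sum_nonempty_subsets_card_power[OF fin, of k] by (simp add: m_def)
    finally have "card (rooted_forests V R) = k * (k + m) ^ (m - 1)"
      using m by (simp add: ac_simps)
    moreover have "(k + m) ^ (m - 1) * (k + m) = (k + m) ^ m"
      using m by (simp flip: power_Suc2)
    ultimately show ?thesis
      using n by (simp add: k_def m_def ac_simps)
  qed
qed

lemma rooted_forest_cut_edge:
  assumes f: "f \<in> rooted_forests V R"
  shows "f(x := x) \<in> rooted_forests V (insert x R)"
proof -
  have step: "(\<exists>j. ((f(x := x)) ^^ j) z \<in> insert x R) \<or> ((f(x := x)) z = f z \<and> f z \<in> V)"
    if "z \<in> V" for z
  proof (cases "z \<in> insert x R")
    case True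
    then have "((f(x := x)) ^^ 0) z \<in> insert x R" by simp
    then show ?thesis by blast
  next
    case False
    then show ?thesis using rooted_forest_parent[OF f, of z] that by simp
  qed
  have "\<exists>j. ((f(x := x)) ^^ j) y \<in> insert x R" if y: "y \<in> V" for y
  proof -
    obtain k where "(f ^^ k) y \<in> R" using rooted_forest_reaches_root[OF f y] ..
    then show ?thesis
      using funpow_reach_transfer[of V "f(x := x)" "insert x R" f R y k] step y by (metis funpow_0 insertCI)
  qed
  then show ?thesis
    using rooted_forest_parent[OF f] rooted_forest_fixed[OF f] by (auto simp: rooted_forests_def)
qed

lemma rooted_forest_link_root:
  assumes g: "g \<in> rooted_forests V (insert x R)" and x: "x \<in> V - R" and r: "r \<in> R" and R: "R \<subseteq> V"
  shows "g(x := r) \<in> rooted_forests V R"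
proof -
  have x_step: "((g(x := r)) ^^ 1) x \<in> R" using r by simp
  have base: "\<exists>j. ((g(x := r)) ^^ j) z \<in> R" if "z \<in> insert x R" for z
  proof (cases "z = x")
    case False
    then have "((g(x := r)) ^^ 0) z \<in> R" using that by simp
    then show ?thesis ..
  qed (use x_step in blast)
  have step: "(\<exists>j. ((g(x := r)) ^^ j) z \<in> R) \<or> ((g(x := r)) z = g z \<and> g z \<in> V)"
    if "z \<in> V" for z
    using base rooted_forest_parent[OF g, of z] that by (cases "z \<in> insert x R") auto
  have "\<exists>j. ((g(x := r)) ^^ j) y \<in> R" if y: "y \<in> V" for y
  proof -
    obtain k where "(g ^^ k) y \<in> insert x R" using rooted_forest_reaches_root[OF g y] ..
    then show ?thesis
      using funpow_reach_transfer[of V "g(x := r)" R g "insert x R" y k] step base y by blast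
  qed
  moreover have "(g(x := r)) y \<in> V" if "y \<in> V - R" for y
    using rooted_forest_parent[OF g, of y] r R that by auto
  moreover have "(g(x := r)) y = y" if "y \<notin> V - R" for y
    using rooted_forest_fixed[OF g, of y] x that by auto
  ultimately show ?thesis
    by (simp add: rooted_forests_def)
qed

lemma rooted_forests_contract_bij:
  assumes x: "x \<in> V - R" and r: "r \<in> R" and R: "R \<subseteq> V"
  shows "bij_betw (\<lambda>f. f(x := x)) {f \<in> rooted_forests V R. f x = r} (rooted_forests V (insert x R))"
proof (rule bij_betw_byWitness[where f' = "\<lambda>g. g(x := r)"])
  show "\<forall>f\<in>{f \<in> rooted_forests V R. f x = r}. f(x := x, x := r) = f"
    by auto
  show "\<forall>g\<in>rooted_forests V (insert x R). g(x := r, x := x) = g"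
    using rooted_forest_fixed by fastforce
  show "(\<lambda>f. f(x := x)) ` {f \<in> rooted_forests V R. f x = r} \<subseteq> rooted_forests V (insert x R)"
  proof clarify
    fix f assume "f \<in> rooted_forests V R"
    then show "f(x := x) \<in> rooted_forests V (insert x R)" by (rule rooted_forest_cut_edge)
  qed
  show "(\<lambda>g. g(x := r)) ` rooted_forests V (insert x R) \<subseteq> {f \<in> rooted_forests V R. f x = r}"
    using rooted_forest_link_root[OF _ x r R] by auto
qed

lemma card_rooted_forests_parent_root:
  assumes "x \<in> V - R" "r \<in> R" "R \<subseteq> V" and P: "\<And>f. P (f(x := x)) \<longleftrightarrow> P f"
  shows "card {f \<in> rooted_forests V R. f x = r \<and> P f} = card {g \<in> rooted_forests V (insert x R). P g}"
proof -
  have "bij_betw (\<lambda>f. f(x := x)) {f \<in> {f \<in> rooted_forests V R. f x = r}. P f}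
          {g \<in> rooted_forests V (insert x R). P g}"
    using P by (intro bij_betw_Collect[OF rooted_forests_contract_bij[OF assms(1-3)]])
  from bij_betw_same_card[OF this] show ?thesis
    by (simp add: conj_assoc)
qed

lemma funpow_conjugate_transpose:
  "(Transposition.transpose a b \<circ> f \<circ> Transposition.transpose a b) ^^ k =
     Transposition.transpose a b \<circ> f ^^ k \<circ> Transposition.transpose a b"
  by (induction k) (auto simp: fun_eq_iff)

lemma rooted_forest_transpose:
  assumes f: "f \<in> rooted_forests V R" and d: "d \<in> V - R" "d' \<in> V - R"
  shows "Transposition.transpose d d' \<circ> f \<circ> Transposition.transpose d d' \<in> rooted_forests V R"
proof -
  let ?\<tau> = "Transposition.transpose d d'"
  have \<tau>_fixed: "?\<tau> y = y" if "y \<notin> V - R" for y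
    using that d by (intro transpose_apply_other) auto
  have \<tau>_nonroot: "?\<tau> y \<in> V - R" if "y \<in> V - R" for y
    using that d by (auto simp: Transposition.transpose_def)
  have "\<exists>k. ((?\<tau> \<circ> f \<circ> ?\<tau>) ^^ k) y \<in> R" if y: "y \<in> V" for y
  proof -
    have "?\<tau> y \<in> V" using y \<tau>_fixed \<tau>_nonroot by (cases "y \<in> R") auto
    then obtain k where "(f ^^ k) (?\<tau> y) \<in> R" using rooted_forest_reaches_root[OF f] by blast
    then have "((?\<tau> \<circ> f \<circ> ?\<tau>) ^^ k) y \<in> R"
      unfolding funpow_conjugate_transpose using \<tau>_fixed by simp
    then show ?thesis ..
  qed
  moreover have "(?\<tau> \<circ> f \<circ> ?\<tau>) y \<in> V" if "y \<in> V - R" for y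
    using rooted_forest_parent[OF f] \<tau>_fixed \<tau>_nonroot that by (cases "f (?\<tau> y) \<in> R") auto
  moreover have "(?\<tau> \<circ> f \<circ> ?\<tau>) y = y" if "y \<notin> V - R" for y
    using rooted_forest_fixed[OF f] \<tau>_fixed that by simp
  ultimately show ?thesis by (simp add: rooted_forests_def)
qed

lemma card_rooted_forests_parent_eq:
  assumes d: "d \<in> V - R" "d' \<in> V - R" and "c \<noteq> d" "c \<noteq> d'"
  shows "card {f \<in> rooted_forests V R. f c = d} = card {f \<in> rooted_forests V R. f c = d'}"
proof -
  let ?conj = "\<lambda>f. Transposition.transpose d d' \<circ> f \<circ> Transposition.transpose d d'"
  have c_fixed: "Transposition.transpose d d' c = c" using assms by simp
  have "bij_betw ?conj {f \<in> rooted_forests V R. f c = d} {f \<in> rooted_forests V R. f c = d'}"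
  proof (rule bij_betw_byWitness[where f' = ?conj])
    show "\<forall>f\<in>{f \<in> rooted_forests V R. f c = d}. ?conj (?conj f) = f"
      by (simp add: fun_eq_iff)
    show "\<forall>f\<in>{f \<in> rooted_forests V R. f c = d'}. ?conj (?conj f) = f"
      by (simp add: fun_eq_iff)
    show "?conj ` {f \<in> rooted_forests V R. f c = d} \<subseteq> {f \<in> rooted_forests V R. f c = d'}"
      using rooted_forest_transpose[OF _ d] c_fixed by auto
    show "?conj ` {f \<in> rooted_forests V R. f c = d'} \<subseteq> {f \<in> rooted_forests V R. f c = d}"
      using rooted_forest_transpose[OF _ d] c_fixed by auto
  qed
  then show ?thesis by (rule bij_betw_same_card)
qed

lemma card_rooted_forests_by_parent:
  assumes V: "finite V" and R: "R \<subseteq> V" and c: "c \<in> V - R"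
  shows "card (rooted_forests V R) =
           card R * card (rooted_forests V (insert c R)) +
           (\<Sum>d\<in>V - R - {c}. card {f \<in> rooted_forests V R. f c = d})"
proof -
  have "(\<lambda>f. f c) ` rooted_forests V R \<subseteq> R \<union> (V - R - {c})"
    using rooted_forest_parent[OF _ c] rooted_forest_no_fixpoint[OF _ c] by fastforce
  then have "card (rooted_forests V R) = (\<Sum>d\<in>R \<union> (V - R - {c}). card {f \<in> rooted_forests V R. f c = d})"
    using V R finite_subset by (intro card_eq_sum_card_fibres finite_rooted_forests) auto
  also have "\<dots> = (\<Sum>d\<in>R. card {f \<in> rooted_forests V R. f c = d}) +
                  (\<Sum>d\<in>V - R - {c}. card {f \<in> rooted_forests V R. f c = d})"
    using V R finite_subset by (intro sum.union_disjoint) auto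
  also have "(\<Sum>d\<in>R. card {f \<in> rooted_forests V R. f c = d}) = card R * card (rooted_forests V (insert c R))"
    using card_rooted_forests_parent_root[OF c _ R, where P = "\<lambda>_. True"] by simp
  finally show ?thesis .
qed

(* Conjugation by a transposition shows that all non-roots d \<noteq> c are equally frequent parents
   of c; comparing the resulting recurrence with Cayley's formula for R and insert c R gives the
   count. *)
lemma card_rooted_forests_parent_nonroot:
  assumes V: "finite V" and R: "R \<subseteq> V" and c: "c \<in> V - R" and d: "d \<in> V - R" and "c \<noteq> d"
  shows "card {f \<in> rooted_forests V R. f c = d} * card V = card R * card V ^ (card (V - R) - 1)"
proof -
  define n m k H where "n = card V" and "m = card (V - R)" and "k = card R"
    and "H = card {f \<in> rooted_forests V R. f c = d}"
  have "finite R" using V R finite_subset by blast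
  then have n: "n = m + k"
    using card_Diff_subset[OF _ R] card_mono[OF V R] by (simp add: n_def m_def k_def)
  have "card {c, d} \<le> m"
    unfolding m_def using c d V by (intro card_mono) auto
  then have m: "m \<ge> 2" using \<open>c \<noteq> d\<close> by simp
  have "(\<Sum>d'\<in>V - R - {c}. card {f \<in> rooted_forests V R. f c = d'}) = (m - 1) * H"
  proof -
    have "(\<Sum>d'\<in>V - R - {c}. card {f \<in> rooted_forests V R. f c = d'}) = (\<Sum>d'\<in>V - R - {c}. H)"
      unfolding H_def using card_rooted_forests_parent_eq[OF d] \<open>c \<noteq> d\<close> by (intro sum.cong) auto
    then show ?thesis using c V by (simp add: m_def card_Diff_singleton)
  qed
  then have split: "card (rooted_forests V R) = k * card (rooted_forests V (insert c R)) + (m - 1) * H"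
    using card_rooted_forests_by_parent[OF V R c] by (simp add: k_def)
  have forests: "card (rooted_forests V R) * n = k * n ^ m"
    using card_rooted_forests[OF V R] by (simp add: n_def m_def k_def)
  have "card (V - insert c R) = m - 1"
    using card_Diff_singleton[of c "V - R"] c unfolding m_def by (metis Diff_insert)
  moreover have "card (insert c R) = Suc k"
    using c \<open>finite R\<close> by (simp add: k_def)
  ultimately have contracted: "card (rooted_forests V (insert c R)) * n = Suc k * n ^ (m - 1)"
    using card_rooted_forests[OF V] c R by (simp add: n_def)
  obtain m' where m': "m = Suc m'" "m' > 0" using m by (cases m) auto
  have "k * n ^ m = k * (Suc k * n ^ m') + m' * (H * n)"
    using arg_cong[OF split, of "\<lambda>t. t * n"] forests contracted m' by (simp add: algebra_simps)
  moreover have "k * n ^ m = k * (Suc k * n ^ m') + m' * (k * n ^ m')"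
    using n m' by (simp add: algebra_simps)
  ultimately have "H * n = k * n ^ m'"
    using m' by simp
  then show ?thesis using m' by (simp add: H_def n_def k_def m_def)
qed

section \<open>Spanning trees of the complete graph as rooted forests\<close>

definition forest_edges :: "'a set \<Rightarrow> 'a set \<Rightarrow> ('a \<Rightarrow> 'a) \<Rightarrow> 'a set set" where
  "forest_edges V R f = (\<lambda>x. {x, f x}) ` (V - R)"

lemma forest_edges_root_iff:
  assumes "a \<in> R" "b \<in> V - R"
  shows "{a, b} \<in> forest_edges V R f \<longleftrightarrow> f b = a"
  using assms by (force simp: forest_edges_def doubleton_eq_iff)

lemma forest_edges_nonroot_iff:
  assumes "c \<in> V - R" "d \<in> V - R"
  shows "{c, d} \<in> forest_edges V R f \<longleftrightarrow> f c = d \<or> f d = c"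
  using assms by (force simp: forest_edges_def doubleton_eq_iff)

lemma sym_adj: "sym (adj T)"
  by (auto simp: sym_def adj_def insert_commute)

lemma connected_by_common_vertex:
  assumes "(u, r) \<in> (adj T)\<^sup>*" "(v, r) \<in> (adj T)\<^sup>*"
  shows "connected_by T u v"
  using assms symD[OF sym_rtrancl[OF sym_adj]] by (auto simp: connected_by_def intro: rtrancl_trans)

lemma rooted_forest_path_to_root:
  assumes f: "f \<in> rooted_forests V {r}" and T: "forest_edges V {r} f \<subseteq> T" and y: "y \<in> V"
  shows "(y, r) \<in> (adj T)\<^sup>*"
proof -
  have "(y, r) \<in> (adj T)\<^sup>*" if "y \<in> V" "(f ^^ k) y = r" for k y
    using that
  proof (induction k arbitrary: y)
    case 0
    then show ?case by simp
  next
    case (Suc k)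
    show ?case
    proof (cases "y = r")
      case False
      then have y: "y \<in> V - {r}" using Suc.prems by simp
      then have "(y, f y) \<in> adj T"
        using T rooted_forest_no_fixpoint[OF f y] by (auto simp: adj_def forest_edges_def)
      moreover have "(f y, r) \<in> (adj T)\<^sup>*"
        using Suc.IH[of "f y"] rooted_forest_parent[OF f y] Suc.prems(2) by (simp add: funpow_swap1)
      ultimately show ?thesis by (rule converse_rtrancl_into_rtrancl)
    qed simp
  qed
  then show ?thesis using rooted_forest_reaches_root[OF f y] y by blast
qed

(* The descendants of x are closed under the remaining edges but do not contain f x. *)
lemma forest_edge_bridge:
  assumes f: "f \<in> rooted_forests V R" and x: "x \<in> V - R"
  shows "(x, f x) \<notin> (adj (forest_edges V R f - {{x, f x}}))\<^sup>*"
proof -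
  let ?A = "adj (forest_edges V R f - {{x, f x}})"
  define D where "D = {y. \<exists>k. (f ^^ k) y = x}"
  have "x \<in> D" using funpow_0[of f x] unfolding D_def by blast
  have closed: "z \<in> D" if yz: "(y, z) \<in> ?A" and "y \<in> D" for y z
  proof -
    from yz obtain w where w: "w \<in> V - R" "{y, z} = {w, f w}" "{y, z} \<noteq> {x, f x}"
      unfolding adj_def forest_edges_def by blast
    obtain k where k: "(f ^^ k) y = x" using \<open>y \<in> D\<close> by (auto simp: D_def)
    from w(2) consider "y = w" "z = f w" | "y = f w" "z = w" by (auto simp: doubleton_eq_iff)
    then show ?thesis
    proof cases
      case 1
      then have "k \<noteq> 0" using k w(3) by auto
      then obtain j where "k = Suc j" using not0_implies_Suc by blast
      then have "(f ^^ j) z = x" using k 1 by (simp add: funpow_swap1)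
      then show ?thesis by (auto simp: D_def)
    next
      case 2
      then have "(f ^^ Suc k) z = x" using k by (simp add: funpow_swap1)
      then show ?thesis unfolding D_def by blast
    qed
  qed
  have "z \<in> D" if "(x, z) \<in> ?A\<^sup>*" for z
    using that by (induction rule: rtrancl_induct) (use \<open>x \<in> D\<close> closed in blast)+
  moreover have "f x \<notin> D"
  proof
    assume "f x \<in> D"
    then obtain k where "(f ^^ Suc k) x = x" by (auto simp: D_def funpow_swap1)
    then show False using rooted_forest_no_cycle[OF f x] by blast
  qed
  ultimately show ?thesis by blast
qed

lemma spanning_tree_forest_edges:
  assumes f: "f \<in> rooted_forests {1..n} {r}"
  shows "is_spanning_tree n (forest_edges {1..n} {r} f)"
proof -
  let ?T = "forest_edges {1..n} {r} f"
  have "?T \<subseteq> Kn_edges n"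
    using rooted_forest_parent[OF f] rooted_forest_no_fixpoint[OF f]
    by (fastforce simp: forest_edges_def Kn_edges_def)
  moreover have "connected_by ?T u v" if "u \<in> {1..n}" "v \<in> {1..n}" for u v
    using rooted_forest_path_to_root[OF f order_refl] that by (blast intro: connected_by_common_vertex)
  moreover have "\<not> connected_by (?T - {e}) u v" if "e \<in> ?T" "e = {u, v}" for e u v
  proof -
    obtain x where x: "x \<in> {1..n} - {r}" "e = {x, f x}"
      using \<open>e \<in> ?T\<close> unfolding forest_edges_def by blast
    have "(x, f x) \<notin> (adj (?T - {e}))\<^sup>*" "(f x, x) \<notin> (adj (?T - {e}))\<^sup>*"
      using forest_edge_bridge[OF f x(1)] symD[OF sym_rtrancl[OF sym_adj]] x(2) by blast+
    moreover have "(u = x \<and> v = f x) \<or> (u = f x \<and> v = x)"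
      using x(2) \<open>e = {u, v}\<close> by (auto simp: doubleton_eq_iff)
    ultimately show ?thesis unfolding connected_by_def by blast
  qed
  ultimately show ?thesis by (auto simp: is_spanning_tree_def)
qed

lemma rtrancl_step_closer:
  fixes A :: "('a \<times> 'a) set" and r :: 'a
  defines "depth y \<equiv> LEAST k. (y, r) \<in> A ^^ k"
  assumes "(y, r) \<in> A\<^sup>*" "y \<noteq> r"
  shows "\<exists>z. (y, z) \<in> A \<and> depth z < depth y"
proof -
  have path: "(y, r) \<in> A ^^ depth y"
    using assms(2) unfolding depth_def rtrancl_power by (metis LeastI)
  have "depth y \<noteq> 0"
  proof
    assume "depth y = 0"
    then show False using path assms(3) by simp
  qed
  then obtain j where j: "depth y = Suc j" using not0_implies_Suc by blast
  then obtain z where "(y, z) \<in> A" "(z, r) \<in> A ^^ j"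
    using path by (metis relpow_Suc_D2)
  moreover from this(2) have "depth z \<le> j" unfolding depth_def by (rule Least_le)
  ultimately show ?thesis using j by auto
qed

(* A breadth-first search tree: every vertex points to a neighbour closer to r. *)
lemma connected_imp_rooted_forest:
  assumes r: "r \<in> V" and edges: "\<And>e. e \<in> T \<Longrightarrow> e \<subseteq> V"
    and conn: "\<And>y. y \<in> V \<Longrightarrow> (y, r) \<in> (adj T)\<^sup>*"
  obtains f where "f \<in> rooted_forests V {r}" "forest_edges V {r} f \<subseteq> T"
proof -
  define depth where "depth y = (LEAST k. (y, r) \<in> adj T ^^ k)" for y
  have closer: "\<exists>z. (y, z) \<in> adj T \<and> depth z < depth y" if "y \<in> V - {r}" for y
    using rtrancl_step_closer[of y r "adj T"] conn that unfolding depth_def by blast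
  define f where "f y = (if y \<in> V - {r} then (SOME z. (y, z) \<in> adj T \<and> depth z < depth y) else y)" for y
  have f_step: "(y, f y) \<in> adj T \<and> depth (f y) < depth y" if "y \<in> V - {r}" for y
    using someI_ex[OF closer[OF that]] that by (simp add: f_def)
  have f_in: "f y \<in> V" if "y \<in> V - {r}" for y
    using f_step[OF that] edges by (auto simp: adj_def)
  have "\<exists>k. (f ^^ k) y \<in> {r}" if "y \<in> V" for y
    using that
  proof (induction "depth y" arbitrary: y rule: less_induct)
    case less
    show ?case
    proof (cases "y = r")
      case True
      then have "(f ^^ 0) y \<in> {r}" by simp
      then show ?thesis ..
    next
      case False
      then have y: "y \<in> V - {r}" using less.prems by simp
      then obtain k where "(f ^^ k) (f y) \<in> {r}" using less.hyps f_step f_in by blast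
      then have "(f ^^ Suc k) y \<in> {r}" by (simp add: funpow_swap1)
      then show ?thesis ..
    qed
  qed
  then have "f \<in> rooted_forests V {r}"
    using f_in by (auto simp: rooted_forests_def f_def)
  moreover have "forest_edges V {r} f \<subseteq> T"
    using f_step by (auto simp: forest_edges_def adj_def)
  ultimately show ?thesis by (rule that)
qed

lemma spanning_tree_eq_forest_edges:
  assumes T: "is_spanning_tree n T" and f: "f \<in> rooted_forests {1..n} {r}"
    and sub: "forest_edges {1..n} {r} f \<subseteq> T"
  shows "forest_edges {1..n} {r} f = T"
proof (rule ccontr)
  assume "forest_edges {1..n} {r} f \<noteq> T"
  then obtain e where e: "e \<in> T" "e \<notin> forest_edges {1..n} {r} f" using sub by blast
  then obtain u v where uv: "e = {u, v}" "u \<in> {1..n}" "v \<in> {1..n}"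
    using T by (auto simp: is_spanning_tree_def Kn_edges_def)
  have "forest_edges {1..n} {r} f \<subseteq> T - {e}" using sub e by blast
  then have "connected_by (T - {e}) u v"
    using rooted_forest_path_to_root[OF f] uv by (blast intro: connected_by_common_vertex)
  then show False using T e uv by (auto simp: is_spanning_tree_def)
qed

lemma inj_on_forest_edges: "inj_on (forest_edges V R) (rooted_forests V R)"
proof (rule inj_onI, rule ext)
  fix f g y
  assume f: "f \<in> rooted_forests V R" and g: "g \<in> rooted_forests V R"
    and E: "forest_edges V R f = forest_edges V R g"
  have along_path: "f y = g y" if "y \<in> V" "(f ^^ k) y \<in> R" for k y
    using that
  proof (induction k arbitrary: y)
    case 0
    then show ?case using rooted_forest_fixed[OF f] rooted_forest_fixed[OF g] by simp
  next
    case (Suc k)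
    show ?case
    proof (cases "y \<in> R")
      case False
      then have y: "y \<in> V - R" using Suc.prems by simp
      have ff: "f (f y) = g (f y)"
        using Suc.IH[of "f y"] rooted_forest_parent[OF f y] Suc.prems(2) by (simp add: funpow_swap1)
      show ?thesis
      proof (rule ccontr)
        assume ne: "f y \<noteq> g y"
        have "{y, f y} \<in> forest_edges V R f"
          using y unfolding forest_edges_def by (rule imageI)
        then have "{y, f y} \<in> forest_edges V R g"
          by (simp only: E)
        then obtain w where "{y, f y} = {w, g w}"
          unfolding forest_edges_def by (elim imageE) (erule that)
        then have "g (f y) = y" using ne by (auto simp: doubleton_eq_iff)
        then have "(f ^^ Suc 1) y = y" using ff by simp
        then show False using rooted_forest_no_cycle[OF f y] by blast
      qed
    qed (use rooted_forest_fixed[OF f] rooted_forest_fixed[OF g] in simp)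
  qed
  show "f y = g y"
  proof (cases "y \<in> V")
    case True
    then show ?thesis using rooted_forest_reaches_root[OF f True] along_path by blast
  qed (use rooted_forest_fixed[OF f] rooted_forest_fixed[OF g] in simp)
qed

lemma bij_betw_forest_edges_spanning_trees:
  assumes r: "r \<in> {1..n}"
  shows "bij_betw (forest_edges {1..n} {r}) (rooted_forests {1..n} {r}) (spanning_trees n)"
proof (rule bij_betw_imageI[OF inj_on_forest_edges], intro equalityI subsetI)
  fix T assume "T \<in> forest_edges {1..n} {r} ` rooted_forests {1..n} {r}"
  then show "T \<in> spanning_trees n"
    using spanning_tree_forest_edges unfolding spanning_trees_def by blast
next
  fix T assume "T \<in> spanning_trees n"
  then have T: "is_spanning_tree n T" by (simp add: spanning_trees_def)
  have "e \<subseteq> {1..n}" if "e \<in> T" for e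
    using T that unfolding is_spanning_tree_def Kn_edges_def by blast
  moreover have "(y, r) \<in> (adj T)\<^sup>*" if "y \<in> {1..n}" for y
    using T r that unfolding is_spanning_tree_def connected_by_def by blast
  ultimately obtain f where "f \<in> rooted_forests {1..n} {r}" "forest_edges {1..n} {r} f \<subseteq> T"
    using connected_imp_rooted_forest[OF r] by blast
  then show "T \<in> forest_edges {1..n} {r} ` rooted_forests {1..n} {r}"
    using spanning_tree_eq_forest_edges[OF T] by blast
qed

theorem card_spanning_trees:
  assumes "n \<ge> 1"
  shows "card (spanning_trees n) = n ^ (n - 2)"
proof -
  have "card (spanning_trees n) * n = n ^ (n - 1)"
    using bij_betw_same_card[OF bij_betw_forest_edges_spanning_trees[of 1 n]]
      card_rooted_forests[of "{1..n}" "{1}"] assms by simp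
  moreover have "n ^ (n - 1) = n ^ (n - 2) * n"
  proof (cases "n = 1")
    case False
    then have "n - 1 = Suc (n - 2)" using assms by simp
    then show ?thesis by simp
  qed simp
  ultimately show ?thesis using assms by simp
qed

lemma card_spanning_trees_filter:
  assumes "a \<in> {1..n}"
  shows "card {T \<in> spanning_trees n. P T} =
         card {f \<in> rooted_forests {1..n} {a}. P (forest_edges {1..n} {a} f)}"
  using bij_betw_same_card[OF bij_betw_Collect[OF bij_betw_forest_edges_spanning_trees[OF assms]]]
  by simp

lemma finite_Kn_edges: "finite (Kn_edges n)"
  by (rule finite_subset[of _ "Pow {1..n}"]) (auto simp: Kn_edges_def)

lemma finite_spanning_trees: "finite (spanning_trees n)"
  by (rule finite_subset[of _ "Pow (Kn_edges n)"])
    (auto simp: spanning_trees_def is_spanning_tree_def finite_Kn_edges)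

lemma spanning_trees_nonempty:
  assumes "n \<ge> 1"
  shows "spanning_trees n \<noteq> {}"
proof
  assume "spanning_trees n = {}"
  then show False using card_spanning_trees[OF assms] assms by simp
qed

lemma card_spanning_trees_edge:
  assumes "a \<in> {1..n}" "b \<in> {1..n}" "a \<noteq> b"
  shows "card {T \<in> spanning_trees n. {a, b} \<in> T} * n = 2 * n ^ (n - 2)"
proof -
  let ?V = "{1..n}"
  have "card {T \<in> spanning_trees n. {a, b} \<in> T} = card {f \<in> rooted_forests ?V {a}. f b = a \<and> True}"
    using card_spanning_trees_filter[OF assms(1)] forest_edges_root_iff[of a "{a}" b ?V] assms
    by simp
  also have "\<dots> = card (rooted_forests ?V {b, a})"
    using card_rooted_forests_parent_root[of b ?V "{a}" a "\<lambda>_. True"] assms by simp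
  finally show ?thesis
    using card_rooted_forests[of ?V "{b, a}"] assms by (simp add: card_Diff_subset numeral_2_eq_2)
qed

lemma card_spanning_trees_adjacent_edges:
  assumes "a \<in> {1..n}" "b \<in> {1..n}" "c \<in> {1..n}" "a \<noteq> b" "a \<noteq> c" "b \<noteq> c"
  shows "card {T \<in> spanning_trees n. {a, b} \<in> T \<and> {a, c} \<in> T} * n = 3 * n ^ (n - 3)"
proof -
  let ?V = "{1..n}"
  have "card {T \<in> spanning_trees n. {a, b} \<in> T \<and> {a, c} \<in> T} =
        card {f \<in> rooted_forests ?V {a}. f b = a \<and> f c = a}"
    using card_spanning_trees_filter[OF assms(1)] forest_edges_root_iff[of a "{a}" _ ?V] assms
    by simp
  also have "\<dots> = card {g \<in> rooted_forests ?V {b, a}. g c = a \<and> True}"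
    using card_rooted_forests_parent_root[of b ?V "{a}" a "\<lambda>g. g c = a"] assms by simp
  also have "\<dots> = card (rooted_forests ?V {c, b, a})"
    using card_rooted_forests_parent_root[of c ?V "{b, a}" a "\<lambda>_. True"] assms by simp
  finally show ?thesis
    using card_rooted_forests[of ?V "{c, b, a}"] assms by (simp add: card_Diff_subset numeral_3_eq_3)
qed

lemma card_spanning_trees_disjoint_edges:
  assumes "a \<in> {1..n}" "b \<in> {1..n}" "c \<in> {1..n}" "d \<in> {1..n}"
    and "a \<noteq> b" "a \<noteq> c" "a \<noteq> d" "b \<noteq> c" "b \<noteq> d" "c \<noteq> d"
  shows "card {T \<in> spanning_trees n. {a, b} \<in> T \<and> {c, d} \<in> T} * n = 4 * n ^ (n - 3)"
proof -
  let ?V = "{1..n}" and ?F = "rooted_forests {1..n} {b, a}"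
  have "card {T \<in> spanning_trees n. {a, b} \<in> T \<and> {c, d} \<in> T} =
        card {f \<in> rooted_forests ?V {a}. f b = a \<and> (f c = d \<or> f d = c)}"
    using card_spanning_trees_filter[OF assms(1)] forest_edges_root_iff[of a "{a}" b ?V]
      forest_edges_nonroot_iff[of c ?V "{a}" d] assms
    by simp
  also have "\<dots> = card {g \<in> ?F. g c = d \<or> g d = c}"
    using card_rooted_forests_parent_root[of b ?V "{a}" a "\<lambda>g. g c = d \<or> g d = c"] assms by simp
  also have "{g \<in> ?F. g c = d \<or> g d = c} = {g \<in> ?F. g c = d} \<union> {g \<in> ?F. g d = c}"
    by blast
  also have "card \<dots> = card {g \<in> ?F. g c = d} + card {g \<in> ?F. g d = c}"
  proof (rule card_Un_disjoint)
    show "{g \<in> ?F. g c = d} \<inter> {g \<in> ?F. g d = c} = {}"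
      using rooted_forest_no_cycle[of _ ?V "{b, a}" c 1] assms by auto
  qed (simp_all add: finite_rooted_forests)
  finally have "card {T \<in> spanning_trees n. {a, b} \<in> T \<and> {c, d} \<in> T} =
                card {g \<in> ?F. g c = d} + card {g \<in> ?F. g d = c}" .
  moreover have "card {g \<in> ?F. g c = d} * n = 2 * n ^ (n - 3)" "card {g \<in> ?F. g d = c} * n = 2 * n ^ (n - 3)"
    using card_rooted_forests_parent_nonroot[of ?V "{b, a}" c d]
      card_rooted_forests_parent_nonroot[of ?V "{b, a}" d c] assms
    by (simp_all add: card_Diff_subset numeral_2_eq_2 numeral_3_eq_3)
  ultimately show ?thesis by (simp add: add_mult_distrib)
qed

section \<open>Covariance of repetition counts of independent samples\<close>

lemma covariance_pmf_commute: "covariance_pmf M X Y = covariance_pmf M Y X"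
  by (simp add: covariance_pmf_def mult.commute)

context
  fixes M :: "'a pmf"
  assumes finite_support: "finite (set_pmf M)"
begin

lemma integrable_finite_support: "integrable M (f :: 'a \<Rightarrow> real)"
  by (rule integrable_measure_pmf_finite[OF finite_support])

lemma covariance_pmf_add_left:
  "covariance_pmf M (\<lambda>x. X x + Z x) Y = covariance_pmf M X Y + covariance_pmf M Z Y"
  by (simp add: covariance_pmf_def distrib_right integrable_finite_support)

lemma covariance_pmf_sum_left:
  "covariance_pmf M (\<lambda>x. \<Sum>i\<in>I. X i x) Y = (\<Sum>i\<in>I. covariance_pmf M (X i) Y)"
  by (simp add: covariance_pmf_def sum_distrib_right sum_subtractf integrable_finite_support)

lemma covariance_pmf_diff_const_left:
  "covariance_pmf M (\<lambda>x. X x - c) Y = covariance_pmf M X Y"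
  by (simp add: covariance_pmf_def left_diff_distrib integrable_finite_support)

lemma covariance_pmf_const_diff_left:
  "covariance_pmf M (\<lambda>x. c - X x) Y = - covariance_pmf M X Y"
  by (simp add: covariance_pmf_def left_diff_distrib integrable_finite_support)

lemma covariance_pmf_add_right:
  "covariance_pmf M X (\<lambda>x. Y x + Z x) = covariance_pmf M X Y + covariance_pmf M X Z"
  using covariance_pmf_add_left covariance_pmf_commute by metis

lemma covariance_pmf_sum_right:
  "covariance_pmf M X (\<lambda>x. \<Sum>i\<in>I. Y i x) = (\<Sum>i\<in>I. covariance_pmf M X (Y i))"
  using covariance_pmf_sum_left[of "\<lambda>i x. Y i x" I X] by (simp add: covariance_pmf_commute)

lemma covariance_pmf_diff_const_right:
  "covariance_pmf M X (\<lambda>x. Y x - c) = covariance_pmf M X Y"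
  using covariance_pmf_diff_const_left covariance_pmf_commute by metis

lemma covariance_pmf_const_diff_right:
  "covariance_pmf M X (\<lambda>x. c - Y x) = - covariance_pmf M X Y"
  using covariance_pmf_const_diff_left covariance_pmf_commute by metis

end

lemma prod_if_eq_const:
  assumes "finite S" "i \<in> S"
  shows "(\<Prod>l\<in>S. if l = i then a else b) = a * b ^ (card S - 1)"
  using prod.remove[OF assms, of "\<lambda>l. if l = i then a else b"] assms by (simp add: card_Diff_singleton)

definition tuples :: "'a set \<Rightarrow> nat \<Rightarrow> 'a list set" where
  "tuples A k = {ts. set ts \<subseteq> A \<and> length ts = k}"

lemma finite_tuples: "finite A \<Longrightarrow> finite (tuples A k)"
  by (simp add: tuples_def finite_lists_length_eq)

lemma card_tuples: "finite A \<Longrightarrow> card (tuples A k) = card A ^ k"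
  by (simp add: tuples_def card_lists_length_eq)

lemma tuples_nonempty: "A \<noteq> {} \<Longrightarrow> tuples A k \<noteq> {}"
proof -
  assume "A \<noteq> {}"
  then obtain t where "t \<in> A" by blast
  then have "replicate k t \<in> tuples A k" by (simp add: tuples_def set_replicate_conv_if)
  then show ?thesis by blast
qed

lemma sum_tuples_prod:
  fixes g :: "nat \<Rightarrow> 'a \<Rightarrow> 'b::comm_semiring_1"
  assumes "finite A"
  shows "(\<Sum>ts\<in>tuples A k. \<Prod>i<k. g i (ts ! i)) = (\<Prod>i<k. \<Sum>t\<in>A. g i t)"
proof (induction k arbitrary: g)
  case 0
  have "tuples A 0 = {[]}" by (auto simp: tuples_def)
  then show ?case by simp
next
  case (Suc k)
  have "tuples A (Suc k) = (\<lambda>(ts, t). t # ts) ` (tuples A k \<times> A)"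
    unfolding tuples_def by (rule lists_length_Suc_eq)
  then have "(\<Sum>ts\<in>tuples A (Suc k). \<Prod>i<Suc k. g i (ts ! i)) =
             (\<Sum>ts\<in>tuples A k. \<Sum>t\<in>A. \<Prod>i<Suc k. g i ((t # ts) ! i))"
    by (simp add: sum.reindex inj_split_Cons sum.cartesian_product' del: prod.lessThan_Suc)
  also have "\<dots> = (\<Sum>ts\<in>tuples A k. \<Sum>t\<in>A. g 0 t * (\<Prod>i<k. g (Suc i) (ts ! i)))"
    by (simp only: prod.lessThan_Suc_shift nth_Cons_0 nth_Cons_Suc)
  also have "\<dots> = (\<Sum>t\<in>A. g 0 t) * (\<Sum>ts\<in>tuples A k. \<Prod>i<k. g (Suc i) (ts ! i))"
    by (simp add: sum_distrib_left sum_distrib_right)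
  also have "\<dots> = (\<Prod>i<Suc k. \<Sum>t\<in>A. g i t)"
    using Suc.IH[of "\<lambda>i. g (Suc i)"] by (simp only: prod.lessThan_Suc_shift)
  finally show ?case .
qed

(* For 0/1-valued X this counts the occurrences beyond the first, as the product is 1 - max. *)
definition repetitions :: "nat \<Rightarrow> ('a \<Rightarrow> real) \<Rightarrow> 'a list \<Rightarrow> real" where
  "repetitions k X ts = (\<Sum>i<k. X (ts ! i)) + (\<Prod>i<k. 1 - X (ts ! i)) - 1"

context
  fixes A :: "'a set"
  assumes A_finite: "finite A" and A_nonempty: "A \<noteq> {}"
begin

lemma finite_set_pmf_tuples: "finite (set_pmf (pmf_of_set (tuples A k)))"
  using A_finite A_nonempty by (simp add: finite_tuples tuples_nonempty)

lemma expectation_tuples_prod: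
  fixes g :: "nat \<Rightarrow> 'a \<Rightarrow> real"
  shows "measure_pmf.expectation (pmf_of_set (tuples A k)) (\<lambda>ts. \<Prod>i<k. g i (ts ! i)) =
   (\<Prod>i<k. measure_pmf.expectation (pmf_of_set A) (g i))"
  using A_finite A_nonempty
  by (simp add: integral_pmf_of_set finite_tuples tuples_nonempty sum_tuples_prod card_tuples prod_dividef)

lemma expectation_tuples_nth:
  fixes f :: "'a \<Rightarrow> real"
  assumes "i < k"
  shows "measure_pmf.expectation (pmf_of_set (tuples A k)) (\<lambda>ts. f (ts ! i)) =
         measure_pmf.expectation (pmf_of_set A) f"
proof -
  have "measure_pmf.expectation (pmf_of_set (tuples A k)) (\<lambda>ts. f (ts ! i)) =
        measure_pmf.expectation (pmf_of_set (tuples A k)) (\<lambda>ts. \<Prod>l<k. if l = i then f (ts ! l) else 1)"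
    using assms by (simp add: prod.delta)
  also have "\<dots> = (\<Prod>l<k. measure_pmf.expectation (pmf_of_set A) (\<lambda>t. if l = i then f t else 1))"
    using expectation_tuples_prod[where g = "\<lambda>l t. if l = i then f t else 1"] by simp
  also have "\<dots> = (\<Prod>l<k. if l = i then measure_pmf.expectation (pmf_of_set A) f else 1)"
    by (intro prod.cong) auto
  finally show ?thesis
    using assms by (simp add: prod.delta)
qed

lemma expectation_tuples_nth_nth:
  fixes X Y :: "'a \<Rightarrow> real"
  assumes "i < k" "j < k" "i \<noteq> j"
  shows "measure_pmf.expectation (pmf_of_set (tuples A k)) (\<lambda>ts. X (ts ! i) * Y (ts ! j)) =
         measure_pmf.expectation (pmf_of_set A) X * measure_pmf.expectation (pmf_of_set A) Y"
proof -
  let ?g = "\<lambda>l t. (if l = i then X t else 1) * (if l = j then Y t else 1)"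
  have "measure_pmf.expectation (pmf_of_set (tuples A k)) (\<lambda>ts. X (ts ! i) * Y (ts ! j)) =
        measure_pmf.expectation (pmf_of_set (tuples A k)) (\<lambda>ts. \<Prod>l<k. ?g l (ts ! l))"
    using assms by (simp add: prod.distrib prod.delta)
  also have "\<dots> = (\<Prod>l<k. measure_pmf.expectation (pmf_of_set A) (?g l))"
    by (rule expectation_tuples_prod)
  also have "\<dots> = (\<Prod>l<k. (if l = i then measure_pmf.expectation (pmf_of_set A) X else 1) *
                           (if l = j then measure_pmf.expectation (pmf_of_set A) Y else 1))"
    using assms by (intro prod.cong) auto
  finally show ?thesis
    using assms by (simp add: prod.distrib prod.delta)
qed

lemma expectation_tuples_nth_prod:
  fixes X Y :: "'a \<Rightarrow> real"
  assumes "i < k"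
  shows "measure_pmf.expectation (pmf_of_set (tuples A k)) (\<lambda>ts. X (ts ! i) * (\<Prod>l<k. Y (ts ! l))) =
         measure_pmf.expectation (pmf_of_set A) (\<lambda>t. X t * Y t) *
         measure_pmf.expectation (pmf_of_set A) Y ^ (k - 1)"
proof -
  let ?g = "\<lambda>l t. (if l = i then X t else 1) * Y t"
  have "measure_pmf.expectation (pmf_of_set (tuples A k)) (\<lambda>ts. X (ts ! i) * (\<Prod>l<k. Y (ts ! l))) =
        measure_pmf.expectation (pmf_of_set (tuples A k)) (\<lambda>ts. \<Prod>l<k. ?g l (ts ! l))"
    using assms by (simp add: prod.distrib prod.delta)
  also have "\<dots> = (\<Prod>l<k. measure_pmf.expectation (pmf_of_set A) (?g l))"
    by (rule expectation_tuples_prod)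
  also have "\<dots> = (\<Prod>l<k. if l = i then measure_pmf.expectation (pmf_of_set A) (\<lambda>t. X t * Y t)
                           else measure_pmf.expectation (pmf_of_set A) Y)"
    by (intro prod.cong) auto
  finally show ?thesis
    using assms prod_if_eq_const[of "{..<k}" i] by simp
qed

lemma covariance_tuples_nth_nth:
  fixes X Y :: "'a \<Rightarrow> real"
  assumes "i < k" "j < k"
  shows "covariance_pmf (pmf_of_set (tuples A k)) (\<lambda>ts. X (ts ! i)) (\<lambda>ts. Y (ts ! j)) =
         (if i = j then covariance_pmf (pmf_of_set A) X Y else 0)"
proof (cases "i = j")
  case True
  then show ?thesis
    using assms expectation_tuples_nth[of i k "\<lambda>t. X t * Y t"] expectation_tuples_nth[of i k X]
      expectation_tuples_nth[of i k Y]
    by (simp add: covariance_pmf_def)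
next
  case False
  then show ?thesis
    using assms expectation_tuples_nth_nth[of i k j X Y] expectation_tuples_nth[of i k X]
      expectation_tuples_nth[of j k Y]
    by (simp add: covariance_pmf_def)
qed

lemma covariance_tuples_nth_prod:
  fixes X Y :: "'a \<Rightarrow> real"
  assumes "i < k"
  shows "covariance_pmf (pmf_of_set (tuples A k)) (\<lambda>ts. X (ts ! i)) (\<lambda>ts. \<Prod>l<k. Y (ts ! l)) =
         covariance_pmf (pmf_of_set A) X Y * measure_pmf.expectation (pmf_of_set A) Y ^ (k - 1)"
proof -
  have "measure_pmf.expectation (pmf_of_set A) Y ^ k =
        measure_pmf.expectation (pmf_of_set A) Y * measure_pmf.expectation (pmf_of_set A) Y ^ (k - 1)"
    using assms by (simp flip: power_Suc)
  then show ?thesis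
    using assms expectation_tuples_nth_prod[of i k X Y] expectation_tuples_nth[of i k X]
      expectation_tuples_prod[where g = "\<lambda>_. Y"]
    by (simp add: covariance_pmf_def algebra_simps)
qed

lemma covariance_tuples_prod_prod:
  fixes X Y :: "'a \<Rightarrow> real"
  shows "covariance_pmf (pmf_of_set (tuples A k)) (\<lambda>ts. \<Prod>l<k. X (ts ! l)) (\<lambda>ts. \<Prod>l<k. Y (ts ! l)) =
         (covariance_pmf (pmf_of_set A) X Y +
          measure_pmf.expectation (pmf_of_set A) X * measure_pmf.expectation (pmf_of_set A) Y) ^ k -
         (measure_pmf.expectation (pmf_of_set A) X * measure_pmf.expectation (pmf_of_set A) Y) ^ k"
  using expectation_tuples_prod[where g = "\<lambda>_ t. X t * Y t"] expectation_tuples_prod[where g = "\<lambda>_. X"]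
    expectation_tuples_prod[where g = "\<lambda>_. Y"]
  by (simp add: covariance_pmf_def prod.distrib power_mult_distrib)

lemma covariance_tuples_sum_sum:
  fixes X Y :: "'a \<Rightarrow> real"
  shows "covariance_pmf (pmf_of_set (tuples A k)) (\<lambda>ts. \<Sum>i<k. X (ts ! i)) (\<lambda>ts. \<Sum>i<k. Y (ts ! i)) =
         k * covariance_pmf (pmf_of_set A) X Y"
  by (simp add: covariance_pmf_sum_left[OF finite_set_pmf_tuples]
      covariance_pmf_sum_right[OF finite_set_pmf_tuples] covariance_tuples_nth_nth)

lemma covariance_tuples_sum_prod:
  fixes X Y :: "'a \<Rightarrow> real"
  shows "covariance_pmf (pmf_of_set (tuples A k)) (\<lambda>ts. \<Sum>i<k. X (ts ! i)) (\<lambda>ts. \<Prod>l<k. Y (ts ! l)) =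
         k * covariance_pmf (pmf_of_set A) X Y * measure_pmf.expectation (pmf_of_set A) Y ^ (k - 1)"
  by (simp add: covariance_pmf_sum_left[OF finite_set_pmf_tuples] covariance_tuples_nth_prod)

lemma covariance_repetitions:
  fixes X Y :: "'a \<Rightarrow> real"
  defines "a \<equiv> measure_pmf.expectation (pmf_of_set A) (\<lambda>t. 1 - X t)"
    and "b \<equiv> measure_pmf.expectation (pmf_of_set A) (\<lambda>t. 1 - Y t)"
    and "c \<equiv> covariance_pmf (pmf_of_set A) X Y"
  shows "covariance_pmf (pmf_of_set (tuples A k)) (repetitions k X) (repetitions k Y) =
         k * c * (1 - a ^ (k - 1) - b ^ (k - 1)) + (a * b + c) ^ k - (a * b) ^ k"
proof -
  let ?cov = "covariance_pmf (pmf_of_set (tuples A k))"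
  note fin = finite_set_pmf_tuples[of k]
  have fin_A: "finite (set_pmf (pmf_of_set A))"
    using A_finite A_nonempty by simp
  define S P where "S Z ts = (\<Sum>i<k. Z (ts ! i))" and "P Z ts = (\<Prod>i<k. 1 - Z (ts ! i))"
    for Z :: "'a \<Rightarrow> real" and ts
  have "repetitions k Z = (\<lambda>ts. (S Z ts + P Z ts) - 1)" for Z
    by (simp add: fun_eq_iff repetitions_def S_def P_def)
  then have "?cov (repetitions k X) (repetitions k Y) =
             ?cov (S X) (S Y) + ?cov (S X) (P Y) + ?cov (P X) (S Y) + ?cov (P X) (P Y)"
    by (simp add: covariance_pmf_diff_const_left[OF fin] covariance_pmf_diff_const_right[OF fin]
        covariance_pmf_add_left[OF fin] covariance_pmf_add_right[OF fin])
  moreover have "?cov (S X) (S Y) = k * c"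
    unfolding S_def c_def by (rule covariance_tuples_sum_sum)
  moreover have "?cov (S X) (P Y) = - (k * c * b ^ (k - 1))"
    unfolding S_def P_def b_def c_def
    using covariance_tuples_sum_prod[of k X "\<lambda>t. 1 - Y t"] covariance_pmf_const_diff_right[OF fin_A, of X 1 Y]
    by simp
  moreover have "?cov (P X) (S Y) = - (k * c * a ^ (k - 1))"
  proof -
    have "?cov (S Y) (P X) = - (k * c * a ^ (k - 1))"
      unfolding S_def P_def a_def c_def
      using covariance_tuples_sum_prod[of k Y "\<lambda>t. 1 - X t"] covariance_pmf_const_diff_right[OF fin_A, of Y 1 X]
        covariance_pmf_commute[of "pmf_of_set A" Y X]
      by simp
    then show ?thesis by (metis covariance_pmf_commute)
  qed
  moreover have "?cov (P X) (P Y) = (a * b + c) ^ k - (a * b) ^ k"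
  proof -
    have "covariance_pmf (pmf_of_set A) (\<lambda>t. 1 - X t) (\<lambda>t. 1 - Y t) = c"
      by (simp add: c_def covariance_pmf_const_diff_left[OF fin_A] covariance_pmf_const_diff_right[OF fin_A])
    then show ?thesis
      unfolding P_def a_def b_def
      using covariance_tuples_prod_prod[of k "\<lambda>t. 1 - X t" "\<lambda>t. 1 - Y t"] by (simp add: ac_simps)
  qed
  ultimately show ?thesis by (simp add: algebra_simps)
qed

end

section \<open>Edge indicators of uniform spanning trees\<close>

lemma Max_X_ind:
  assumes "k \<ge> 1"
  shows "(MAX i\<in>{..<k}. X_ind e (ts ! i)) = 1 - (\<Prod>i<k. 1 - X_ind e (ts ! i))"
proof (cases "\<exists>i<k. e \<in> ts ! i")
  case True
  then obtain i where i: "i < k" "e \<in> ts ! i" by blast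
  then have "(MAX i\<in>{..<k}. X_ind e (ts ! i)) = 1"
    by (intro Max_eqI) (auto simp: X_ind_def)
  moreover have "(\<Prod>i<k. 1 - X_ind e (ts ! i)) = 0"
    using i by (auto simp: X_ind_def)
  ultimately show ?thesis by simp
next
  case False
  have "0 \<in> {..<k}" using assms by simp
  then have "(\<lambda>i. X_ind e (ts ! i)) ` {..<k} = {0}"
    using False by (force simp: X_ind_def)
  then have "(MAX i\<in>{..<k}. X_ind e (ts ! i)) = 0"
    by simp
  moreover have "(\<Prod>i<k. 1 - X_ind e (ts ! i)) = 1"
    using False by (simp add: X_ind_def)
  ultimately show ?thesis by simp
qed

lemma R_rep_eq_repetitions: "k \<ge> 1 \<Longrightarrow> R_rep k e = repetitions k (X_ind e)"
  unfolding R_rep_def repetitions_def by (simp add: fun_eq_iff Max_X_ind)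

lemma expectation_pmf_of_set_indicator:
  assumes "finite A" "A \<noteq> {}"
  shows "measure_pmf.expectation (pmf_of_set A) (\<lambda>x. if P x then 1 else 0) = card {x \<in> A. P x} / card A"
  using assms by (simp add: integral_pmf_of_set sum.inter_filter[symmetric])

lemma Kn_edgesE:
  assumes "e \<in> Kn_edges n"
  obtains u v where "e = {u, v}" "u \<in> {1..n}" "v \<in> {1..n}" "u \<noteq> v"
  using assms unfolding Kn_edges_def by blast

lemma expectation_edge_spanning_tree:
  assumes "e \<in> Kn_edges n"
  shows "measure_pmf.expectation (pmf_of_set (spanning_trees n)) (X_ind e) = 2 / n"
proof -
  obtain u v where uv: "e = {u, v}" "u \<in> {1..n}" "v \<in> {1..n}" "u \<noteq> v"
    using Kn_edgesE[OF assms] .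
  then have n: "n \<ge> 1" by simp
  have "finite (spanning_trees n)" "spanning_trees n \<noteq> {}"
    using finite_spanning_trees spanning_trees_nonempty[OF n] .
  moreover have "real (card {T \<in> spanning_trees n. e \<in> T}) * n = 2 * card (spanning_trees n)"
    using card_spanning_trees_edge[OF uv(2-4)] card_spanning_trees[OF n] uv(1)
    by (metis of_nat_mult of_nat_numeral)
  ultimately show ?thesis
    using n by (simp add: X_ind_def[abs_def] expectation_pmf_of_set_indicator field_simps)
qed

lemma Kn_edges_adjacentE:
  assumes "e \<in> Kn_edges n" "e' \<in> Kn_edges n" "e \<noteq> e'" "e \<inter> e' \<noteq> {}"
  obtains x y z where "e = {x, y}" "e' = {x, z}" "x \<in> {1..n}" "y \<in> {1..n}" "z \<in> {1..n}"
    "x \<noteq> y" "x \<noteq> z" "y \<noteq> z"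
proof -
  obtain x where x: "x \<in> e" "x \<in> e'" using assms(4) by blast
  have other: "\<exists>y. f = {x, y} \<and> x \<noteq> y \<and> x \<in> {1..n} \<and> y \<in> {1..n}" if "f \<in> Kn_edges n" "x \<in> f" for f
    using that by (elim Kn_edgesE) (auto simp: insert_commute)
  obtain y z where "e = {x, y}" "e' = {x, z}" "x \<in> {1..n}" "y \<in> {1..n}" "z \<in> {1..n}" "x \<noteq> y" "x \<noteq> z"
    using other[OF assms(1) x(1)] other[OF assms(2) x(2)] by blast
  moreover from this have "y \<noteq> z" using assms(3) by blast
  ultimately show ?thesis by (rule that)
qed

lemma Kn_edges_disjointE:
  assumes "e \<in> Kn_edges n" "e' \<in> Kn_edges n" "e \<inter> e' = {}"
  obtains a b c d where "e = {a, b}" "e' = {c, d}" "a \<in> {1..n}" "b \<in> {1..n}" "c \<in> {1..n}" "d \<in> {1..n}"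
    "a \<noteq> b" "a \<noteq> c" "a \<noteq> d" "b \<noteq> c" "b \<noteq> d" "c \<noteq> d"
proof -
  obtain a b c d where "e = {a, b}" "e' = {c, d}" "a \<in> {1..n}" "b \<in> {1..n}" "c \<in> {1..n}" "d \<in> {1..n}"
    "a \<noteq> b" "c \<noteq> d"
    using assms(1,2) by (elim Kn_edgesE) blast
  moreover from this have "a \<noteq> c" "a \<noteq> d" "b \<noteq> c" "b \<noteq> d" using assms(3) by auto
  ultimately show ?thesis using that by blast
qed

lemma covariance_edges_spanning_tree:
  assumes n: "n \<ge> 3" and e: "e \<in> Kn_edges n" and e': "e' \<in> Kn_edges n" and "e \<noteq> e'"
  shows "covariance_pmf (pmf_of_set (spanning_trees n)) (X_ind e) (X_ind e') =
         (if e \<inter> e' = {} then 0 else - 1 / real n ^ 2)"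
proof -
  let ?both = "{T \<in> spanning_trees n. e \<in> T \<and> e' \<in> T}"
  define m :: nat where "m = (if e \<inter> e' = {} then 4 else 3)"
  have "card ?both * n = m * n ^ (n - 3)"
  proof (cases "e \<inter> e' = {}")
    case True
    then show ?thesis unfolding m_def
      using card_spanning_trees_disjoint_edges by (auto elim!: Kn_edges_disjointE[OF e e'])
  next
    case False
    then show ?thesis unfolding m_def
      using card_spanning_trees_adjacent_edges by (auto elim!: Kn_edges_adjacentE[OF e e' \<open>e \<noteq> e'\<close>])
  qed
  then have "real (card ?both * n) = real (m * n ^ (n - 3))"
    by (simp only:)
  then have both: "real (card ?both) * n = m * real n ^ (n - 3)"
    by simp
  have "n - 2 = Suc (n - 3)" using n by simp
  then have trees: "real (card (spanning_trees n)) = real n * real n ^ (n - 3)"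
    using card_spanning_trees[of n] n by simp
  have "(\<lambda>T. X_ind e T * X_ind e' T) = (\<lambda>T. if e \<in> T \<and> e' \<in> T then 1 else 0)"
    by (simp add: fun_eq_iff X_ind_def)
  then have both_edges:
    "measure_pmf.expectation (pmf_of_set (spanning_trees n)) (\<lambda>T. X_ind e T * X_ind e' T) = m / real n ^ 2"
    using finite_spanning_trees spanning_trees_nonempty[of n] n both trees
    by (simp add: expectation_pmf_of_set_indicator field_simps power2_eq_square)
  have "covariance_pmf (pmf_of_set (spanning_trees n)) (X_ind e) (X_ind e') = m / real n ^ 2 - 2 / n * (2 / n)"
    unfolding covariance_pmf_def both_edges expectation_edge_spanning_tree[OF e]
      expectation_edge_spanning_tree[OF e'] ..
  then show ?thesis
    using n by (cases "e \<inter> e' = {}") (simp_all add: m_def field_simps power2_eq_square)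
qed

lemma covariance_R_rep_tree_tuples:
  assumes k: "k \<ge> 1" and e: "e \<in> Kn_edges n" and e': "e' \<in> Kn_edges n"
  defines "c \<equiv> covariance_pmf (pmf_of_set (spanning_trees n)) (X_ind e) (X_ind e')"
  shows "covariance_pmf (tree_tuple_pmf n k) (R_rep k e) (R_rep k e') =
         k * c * (1 - 2 * (1 - 2 / n) ^ (k - 1)) + ((1 - 2 / n) ^ 2 + c) ^ k - (1 - 2 / n) ^ (2 * k)"
proof -
  have "n \<ge> 1" using e by (elim Kn_edgesE) simp
  then have fin: "finite (spanning_trees n)" and ne: "spanning_trees n \<noteq> {}"
    using finite_spanning_trees spanning_trees_nonempty by simp_all
  have pmf: "tree_tuple_pmf n k = pmf_of_set (tuples (spanning_trees n) k)"
    by (simp add: tree_tuple_pmf_def tree_tuples_def tuples_def conj_commute)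
  have non_edge: "measure_pmf.expectation (pmf_of_set (spanning_trees n)) (\<lambda>T. 1 - X_ind f T) = 1 - 2 / n"
    if "f \<in> Kn_edges n" for f
    using expectation_edge_spanning_tree[OF that] fin ne by (simp add: integrable_measure_pmf_finite)
  define a where "a = 1 - 2 / real n"
  show ?thesis
    unfolding pmf R_rep_eq_repetitions[OF k] covariance_repetitions[OF fin ne] c_def[symmetric]
      non_edge[OF e] non_edge[OF e'] a_def[symmetric]
    by (simp add: power_mult power2_eq_square algebra_simps)
qed

theorem mainTheorem10:
  fixes n k :: nat and e e' :: "nat set"
  assumes "n \<ge> 3" and "k \<ge> 1"
    and "e \<in> Kn_edges n" and "e' \<in> Kn_edges n" and "e \<noteq> e'"
  shows "(e \<inter> e' = {} \<longrightarrow>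
            covariance_pmf (tree_tuple_pmf n k) (R_rep k e) (R_rep k e') = 0)
       \<and> (e \<inter> e' \<noteq> {} \<longrightarrow>
            covariance_pmf (tree_tuple_pmf n k) (R_rep k e) (R_rep k e') =
              - real k / real n ^ 2
              + 2 * real k / real n ^ 2 * (1 - 2 / real n) ^ (k - 1)
              + (1 - 4 / real n + 3 / real n ^ 2) ^ k
              - (1 - 2 / real n) ^ (2 * k))"
proof -
  have "(1 - 2 / real n) ^ 2 - 1 / real n ^ 2 = 1 - 4 / real n + 3 / real n ^ 2"
    using assms(1) by (simp add: field_simps power2_eq_square)
  then show ?thesis
    unfolding covariance_R_rep_tree_tuples[OF assms(2-4)] covariance_edges_spanning_tree[OF assms(1,3-5)]
    by (simp add: power_mult diff_divide_distrib right_diff_distrib)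
qed

end
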